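(* Let $n\geq 2$ and let $f,h:S^1\to S^1$ be orientation-preserving homeomorphisms satisfying $h\circ f\circ h^{-1}=f^n$. Then there exists $l\in\mathbb{N}$ such that the rotation number of $f$ is $\rho(f)=\frac{l}{n-1}$.
   Context: $\rho(f)$ denotes the Poincaré rotation number of an orientation-preserving circle homeomorphism, taken in $\mathbb{R}/\mathbb{Z}$. *)

theory Defs
  imports "HOL-Analysis.Analysis"
begin

text \<open>The circle S^1 is the unit circle in the complex plane; the covering map
  from the real line is t maps to cis(2 pi t).\<close>

definition circ :: "real \<Rightarrow> complex" where
  "circ t = cis (2 * pi * t)"

definition is_lift :: "(complex \<Rightarrow> complex) \<Rightarrow> (real \<Rightarrow> real) \<Rightarrow> bool" where
  "is_lift f F \<longleftrightarrow> continuous_on UNIV F \<and> (\<forall>x. f (circ x) = circ (F x))"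

definition op_circle_homeo :: "(complex \<Rightarrow> complex) \<Rightarrow> bool" where
  "op_circle_homeo f \<longleftrightarrow>
     (\<exists>g. homeomorphism (sphere 0 1) (sphere 0 1) f g) \<and>
     (\<exists>F. is_lift f F \<and> strict_mono F)"

text \<open>Poincare rotation number, as an element of [0,1) representing R/Z:
  fractional part of the translation number lim (F^k(0))/k of an increasing lift F.\<close>
definition rot_num :: "(complex \<Rightarrow> complex) \<Rightarrow> real" where
  "rot_num f = (let F = (SOME F. is_lift f F \<and> strict_mono F)
                in frac (lim (\<lambda>k. (F ^^ k) 0 / real k)))"

end

theory Submission
  imports Defs "HOL-Library.Real_Mod"
begin

text \<open>Let F, H be increasing degree-one lifts of f and h. The conjugacy lifts to
  H \<circ> F = F^n \<circ> H + m for an integer m, since both sides lift the same circle map.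
  A degree-one increasing lift moves every point by its value at 0 up to an error
  of at most 1, so iterating the lifted relation k times from 0 gives
  H(F^k 0) \<approx> F^k 0 and F^(nk)(H 0) \<approx> n F^k 0, whence
  (n - 1) F^k 0 + k m stays bounded. The translation number is therefore -m/(n - 1),
  and its fractional part has the form l/(n - 1).\<close>

lemma circ_eq_iff: "circ a = circ b \<longleftrightarrow> a - b \<in> \<int>"
proof -
  have "circ a = circ b \<longleftrightarrow> cis (2 * pi * (a - b)) = 1"
    by (simp add: circ_def cis_divide[symmetric] right_diff_distrib)
  also have "\<dots> \<longleftrightarrow> a - b \<in> \<int>"
    by (auto simp: cis_eq_1_iff Ints_def)
  finally show ?thesis .
qed

lemma circ_in_sphere: "circ x \<in> sphere 0 1"
  by (simp add: circ_def)

lemma continuous_Ints_valued_constant: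
  fixes g :: "'a::real_normed_vector \<Rightarrow> real"
  assumes "continuous_on UNIV g" and "\<And>x. g x \<in> \<int>"
  shows "g x = g y"
proof -
  have "g constant_on UNIV"
  proof (rule continuous_discrete_range_constant[OF connected_UNIV assms(1)])
    fix x
    show "\<exists>e>0. \<forall>y. y \<in> UNIV \<and> g y \<noteq> g x \<longrightarrow> e \<le> norm (g y - g x)"
    proof (intro exI[of _ 1] conjI allI impI)
      fix y assume "y \<in> UNIV \<and> g y \<noteq> g x"
      moreover obtain a b where "g y = of_int a" "g x = of_int b"
        using assms(2) by (meson Ints_cases)
      ultimately show "1 \<le> norm (g y - g x)" by auto
    qed simp
  qed
  then show ?thesis by (auto simp: constant_on_def)
qed

lemma lifts_differ_by_Int:
  fixes F G :: "real \<Rightarrow> real"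
  assumes "continuous_on UNIV F" and "continuous_on UNIV G"
    and "\<And>x. circ (F x) = circ (G x)"
  obtains m where "m \<in> \<int>" and "\<And>x. F x = G x + m"
proof -
  have diff_Int: "F x - G x \<in> \<int>" for x
    using assms(3) by (simp add: circ_eq_iff)
  have "continuous_on UNIV (\<lambda>x. F x - G x)"
    using assms(1,2) by (rule continuous_on_diff)
  then have "F x - G x = F 0 - G 0" for x
    using diff_Int by (rule continuous_Ints_valued_constant)
  then show ?thesis
    by (intro that[OF diff_Int[of 0]]) (simp add: algebra_simps)
qed

lemma continuous_on_funpow:
  fixes F :: "'a::topological_space \<Rightarrow> 'a"
  assumes "continuous_on UNIV F"
  shows "continuous_on UNIV (F ^^ k)"
proof (induction k)
  case (Suc k)
  then show ?case
    using continuous_on_compose[OF Suc continuous_on_subset[OF assms]] by (simp add: o_def)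
qed (simp add: continuous_on_id)

lemma is_lift_funpow:
  assumes "is_lift f F"
  shows "is_lift (f ^^ k) (F ^^ k)"
proof -
  have "(f ^^ k) (circ x) = circ ((F ^^ k) x)" for x
    using assms by (induction k) (auto simp: is_lift_def)
  with assms show ?thesis by (simp add: is_lift_def continuous_on_funpow)
qed

definition degree_one :: "(real \<Rightarrow> real) \<Rightarrow> bool" where
  "degree_one F \<longleftrightarrow> (\<forall>x. F (x + 1) = F x + 1)"

lemma degree_one_add_nat:
  assumes "degree_one G"
  shows "G (x + real k) = G x + real k"
proof (induction k)
  case (Suc k)
  have "G (x + real (Suc k)) = G (x + real k + 1)" by (simp add: ac_simps)
  also have "\<dots> = G (x + real k) + 1" using assms by (simp add: degree_one_def)
  finally show ?case using Suc by simp
qed simp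

lemma degree_one_add_Ints:
  assumes "degree_one G" and "k \<in> \<int>"
  shows "G (x + k) = G x + k"
proof -
  obtain j where k: "k = of_int j" using assms(2) by (meson Ints_cases)
  show ?thesis
  proof (cases "j \<ge> 0")
    case True
    then show ?thesis using degree_one_add_nat[OF assms(1), of x "nat j"] k by simp
  next
    case False
    then show ?thesis using degree_one_add_nat[OF assms(1), of "x + k" "nat (- j)"] k by simp
  qed
qed

lemma degree_one_funpow: "degree_one G \<Longrightarrow> degree_one (G ^^ k)"
  by (induction k) (auto simp: degree_one_def)

lemma mono_imp_mono_funpow: "mono (G :: 'a::order \<Rightarrow> 'a) \<Longrightarrow> mono (G ^^ k)"
  by (auto simp: mono_def intro: funpow_mono)

lemma degree_one_displacement_bound:
  assumes "degree_one G" and "mono G"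
  shows "\<bar>G x - x - G 0\<bar> \<le> 1"
proof -
  have x: "x = frac x + of_int \<lfloor>x\<rfloor>" by (simp add: frac_def)
  have "G x = G (frac x) + of_int \<lfloor>x\<rfloor>"
    by (subst x, rule degree_one_add_Ints[OF assms(1)]) simp
  moreover have "G 0 \<le> G (frac x)" "G (frac x) \<le> G 1"
    using assms(2) frac_ge_0[of x] frac_lt_1[of x] by (auto simp: mono_def)
  moreover have "G 1 = G 0 + 1" using assms(1) unfolding degree_one_def by (metis add_0)
  ultimately show ?thesis using x frac_ge_0[of x] frac_lt_1[of x] by linarith
qed

lemma degree_one_funpow_bound:
  assumes "degree_one G" and "mono G"
  shows "\<bar>(G ^^ i) 0 - real i * G 0\<bar> \<le> real i"
proof (induction i)
  case (Suc i)
  have "\<bar>G ((G ^^ i) 0) - (G ^^ i) 0 - G 0\<bar> \<le> 1"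
    by (rule degree_one_displacement_bound[OF assms])
  then show ?case using Suc by (simp add: algebra_simps)
qed simp

lemma strict_mono_lift_degree_one:
  assumes lift: "is_lift f F" and "strict_mono F" and inj: "inj_on f (sphere 0 1)"
  shows "degree_one F"
proof -
  have cont: "continuous_on UNIV F" and lifts: "\<And>x. f (circ x) = circ (F x)"
    using lift by (auto simp: is_lift_def)
  have circ_step: "circ (F (x + 1)) = circ (F x + 1)" for x
  proof -
    have "circ (x + 1) = circ x" "circ (F x + 1) = circ (F x)" by (simp_all add: circ_eq_iff)
    then show ?thesis by (metis lifts)
  qed
  have "continuous_on UNIV (\<lambda>x. F (x + 1))" "continuous_on UNIV (\<lambda>x. F x + 1)"
    using cont by (auto intro!: continuous_intros continuous_on_compose2[OF cont])
  then obtain m where m: "m \<in> \<int>" and step: "\<And>x. F (x + 1) = F x + 1 + m"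
    using lifts_differ_by_Int[of "\<lambda>x. F (x + 1)" "\<lambda>x. F x + 1"] circ_step by blast
  have "m \<ge> 0"
  proof -
    have "F 0 < F 1" using \<open>strict_mono F\<close> by (simp add: strict_mono_def)
    with step[of 0] m show ?thesis by (auto elim!: Ints_cases)
  qed
  moreover have "m \<le> 0"
  proof (rule ccontr)
    assume "\<not> m \<le> 0"
    then have "m \<ge> 1" using m by (auto elim!: Ints_cases)
    then obtain y where y: "0 \<le> y" "y \<le> 1" "F y = F 0 + 1"
      using step[of 0] IVT'[of F 0 "F 0 + 1" 1] continuous_on_subset[OF cont] by auto
    have "f (circ y) = f (circ 0)"
      using lifts[of y] lifts[of 0] y(3) by (simp add: circ_eq_iff)
    then have "y \<in> \<int>"
      using inj circ_in_sphere circ_eq_iff[of y 0] by (simp add: inj_on_eq_iff)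
    then have "y = 0 \<or> y = 1" using y(1,2) by (auto elim!: Ints_cases)
    then show False using y(3) step[of 0] \<open>m \<ge> 1\<close> by auto
  qed
  ultimately show ?thesis using step by (simp add: degree_one_def)
qed

lemma op_circle_homeo_inj_on_sphere:
  assumes "op_circle_homeo f"
  shows "inj_on f (sphere 0 1)" and "f ` sphere 0 1 \<subseteq> sphere 0 1"
proof -
  obtain g where hom: "homeomorphism (sphere 0 1) (sphere 0 1) f g"
    using assms by (auto simp: op_circle_homeo_def)
  then show "inj_on f (sphere 0 1)" by (metis homeomorphism_apply1 inj_on_inverseI)
  show "f ` sphere 0 1 \<subseteq> sphere 0 1" using homeomorphism_image1[OF hom] by simp
qed

lemma conjugacy_lifts:
  assumes inj: "inj_on h (sphere 0 1)" and into: "h ` sphere 0 1 \<subseteq> sphere 0 1"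
    and "is_lift f F" and "is_lift h H" and "is_lift g G"
    and conj: "\<forall>z\<in>sphere 0 1. h (f (inv_into (sphere 0 1) h z)) = g z"
  obtains m where "m \<in> \<int>" and "\<And>x. H (F x) = G (H x) + m"
proof -
  have circ_eq: "circ (H (F x)) = circ (G (H x))" for x
  proof -
    have "h (circ x) \<in> sphere 0 1"
      using into circ_in_sphere[of x] by blast
    then have "h (f (circ x)) = g (h (circ x))"
      using conj inv_into_f_f[OF inj circ_in_sphere] by metis
    then show ?thesis
      using assms(3-5) by (simp add: is_lift_def)
  qed
  have "continuous_on UNIV (\<lambda>x. H (F x))" "continuous_on UNIV (\<lambda>x. G (H x))"
    using assms(3-5) by (auto simp: is_lift_def intro: continuous_on_compose2)
  then show ?thesis
    using lifts_differ_by_Int[of "\<lambda>x. H (F x)" "\<lambda>x. G (H x)"] circ_eq that by blast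
qed

lemma conjugacy_lifts_funpow:
  assumes "degree_one F" and "m \<in> \<int>" and conj: "\<And>x. H (F x) = (F ^^ n) (H x) + m"
  shows "H ((F ^^ k) x) = (F ^^ (n * k)) (H x) + real k * m"
proof (induction k)
  case (Suc k)
  have "H ((F ^^ Suc k) x) = (F ^^ n) ((F ^^ (n * k)) (H x) + real k * m) + m"
    using conj Suc by simp
  also have "\<dots> = (F ^^ (n * Suc k)) (H x) + real k * m + m"
    using degree_one_add_Ints[OF degree_one_funpow[OF assms(1)]] assms(2)
    by (simp add: funpow_add)
  finally show ?case by (simp add: algebra_simps)
qed simp

lemma conjugacy_lifts_orbit_bound:
  assumes F: "degree_one F" "mono F" and H: "degree_one H" "mono H"
    and "m \<in> \<int>" and "\<And>x. H (F x) = (F ^^ n) (H x) + m"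
  shows "\<bar>(real n - 1) * (F ^^ k) 0 + real k * m\<bar> \<le> real n + 2"
proof -
  have Fk: "degree_one (F ^^ j)" "mono (F ^^ j)" for j
    using F by (auto intro: degree_one_funpow mono_imp_mono_funpow)
  have "\<bar>H ((F ^^ k) 0) - (F ^^ k) 0 - H 0\<bar> \<le> 1"
    by (rule degree_one_displacement_bound[OF H])
  moreover have "\<bar>(F ^^ (n * k)) (H 0) - H 0 - (F ^^ (n * k)) 0\<bar> \<le> 1"
    by (rule degree_one_displacement_bound[OF Fk])
  moreover have "\<bar>(F ^^ (n * k)) 0 - real n * (F ^^ k) 0\<bar> \<le> real n"
    using degree_one_funpow_bound[OF Fk[of k], of n] by (simp add: funpow_mult mult.commute)
  moreover have "H ((F ^^ k) 0) = (F ^^ (n * k)) (H 0) + real k * m"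
    by (intro conjugacy_lifts_funpow F(1) assms(5,6))
  ultimately show ?thesis
    by (simp add: abs_le_iff algebra_simps)
qed

lemma LIMSEQ_div_of_bounded_deviation:
  fixes a :: "nat \<Rightarrow> real"
  assumes "d > 0" and bound: "\<And>k. \<bar>d * a k + real k * m\<bar> \<le> C"
  shows "(\<lambda>k. a k / real k) \<longlonglongrightarrow> - m / d"
proof -
  have "(\<lambda>k. a k / real k - (- m / d)) \<longlonglongrightarrow> 0"
  proof (rule Lim_null_comparison)
    show "(\<lambda>k. (C / d) / real k) \<longlonglongrightarrow> 0" by (rule lim_const_over_n)
    show "\<forall>\<^sub>F k in sequentially. norm (a k / real k - - m / d) \<le> (C / d) / real k"
    proof (rule eventually_sequentiallyI[of 1])
      fix k :: nat assume "1 \<le> k"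
      then have k: "real k > 0" by simp
      have "norm (a k / real k - - m / d) = \<bar>d * a k + real k * m\<bar> / (d * real k)"
        using k assms(1) by (simp add: field_simps abs_divide)
      also have "\<dots> \<le> C / (d * real k)"
        using k assms(1) bound[of k] by (intro divide_right_mono) auto
      finally show "norm (a k / real k - - m / d) \<le> (C / d) / real k" by simp
    qed
  qed
  then show ?thesis by (rule LIM_zero_cancel)
qed

lemma frac_of_int_div_nat:
  assumes "d > 0"
  shows "\<exists>l::nat. frac (of_int j / real d) = frac (real l / real d)"
proof
  have "real_of_int j = real_of_int (j div int d) * real d + real_of_int (j mod int d)"
    by (metis div_mult_mod_eq of_int_add of_int_mult of_int_of_nat_eq)
  then have "of_int j / real d = of_int (j div int d) + real (nat (j mod int d)) / real d"
    using assms by (simp add: field_simps)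
  then show "frac (of_int j / real d) = frac (real (nat (j mod int d)) / real d)"
    by simp
qed

theorem mainTheorem2:
  fixes f h :: "complex \<Rightarrow> complex" and n :: nat
  assumes "n \<ge> 2"
    and "op_circle_homeo f" and "op_circle_homeo h"
    and "\<forall>z\<in>sphere 0 1. h (f (inv_into (sphere 0 1) h z)) = (f ^^ n) z"
  shows "\<exists>l::nat. rot_num f = frac (real l / real (n - 1))"
proof -
  define F where "F = (SOME F. is_lift f F \<and> strict_mono F)"
  have "\<exists>F. is_lift f F \<and> strict_mono F"
    using assms(2) by (auto simp: op_circle_homeo_def)
  then have "is_lift f F \<and> strict_mono F"
    unfolding F_def by (rule someI_ex)
  then have F: "is_lift f F" "strict_mono F" by auto
  obtain H where H: "is_lift h H" "strict_mono H"
    using assms(3) by (auto simp: op_circle_homeo_def)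
  note h = op_circle_homeo_inj_on_sphere[OF assms(3)]
  have deg: "degree_one F" "degree_one H"
    using strict_mono_lift_degree_one F H h(1) op_circle_homeo_inj_on_sphere(1)[OF assms(2)]
    by blast+
  obtain m where m: "m \<in> \<int>" and conj: "\<And>x. H (F x) = (F ^^ n) (H x) + m"
    using conjugacy_lifts[OF h F(1) H(1) is_lift_funpow[OF F(1)] assms(4)] by blast
  have "\<bar>(real n - 1) * (F ^^ k) 0 + real k * m\<bar> \<le> real n + 2" for k
    by (rule conjugacy_lifts_orbit_bound[where H = H]) (use deg F H m conj strict_mono_mono in auto)
  then have "(\<lambda>k. (F ^^ k) 0 / real k) \<longlonglongrightarrow> - m / (real n - 1)"
    by (rule LIMSEQ_div_of_bounded_deviation[rotated]) (use assms(1) in simp)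
  then have "rot_num f = frac (- m / (real n - 1))"
    unfolding rot_num_def Let_def F_def[symmetric] by (simp add: limI)
  moreover obtain j where "m = of_int j" using m by (meson Ints_cases)
  ultimately have "rot_num f = frac (of_int (- j) / real (n - 1))"
    using assms(1) by (simp add: of_nat_diff)
  then show ?thesis using frac_of_int_div_nat[of "n - 1" "- j"] assms(1) by simp
qed

end
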